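(* Consider any memoryless quantum query algorithm with input alphabet $\Sigma=\{0,\dots,m-1\}$ accessing a uniformly random input $x\in\Sigma^n$, and let $|\phi^t\rangle=(I\otimes S)|\psi^t\rangle$ be its joint state with the record after $t$ queries. Define $$\Delta_t=\|\Pi|\phi^t\rangle\|,\qquad \Pi=I\otimes\sum_{x\in(\Sigma\cup\{\varnothing\})^n:\ \exists i\ne j,\ x_i=x_j\ne\varnothing}|x\rangle\langle x|.$$ Then $\Delta_{t+1}\le\Delta_t+\sqrt{10t/m}$ for every $t$ such that $t+1$ is at most the number of queries of the algorithm.
   Context: Let $m\ge2$, $\Sigma=\{0,\dots,m-1\}$, $\omega=e^{2\pi\mathbf i/m}$. The algorithm space has basis $|i,b\rangle$, $i\in\{1,\dots,n\}$, $b\in\Sigma$; a memoryless $T$-query algorithm is a sequence of unitaries $U_0,\dots,U_T$ on it, with fixed initial basis state $|\mathrm{init}\rangle$. The phase oracle is $O^\pm_x|i,b\rangle=\omega^{bx_i}|i,b\rangle$. The joint state after $t$ queries is $|\psi^t\rangle=\sum_{x\in\Sigma^n}m^{-n/2}|\psi_x^t\rangle\otimes|x\rangle$ with $|\psi_x^t\rangle=U_tO^\pm_x\cdots U_1O^\pm_xU_0|\mathrm{init}\rangle$. The record space is $(\mathbb C^{m+1})^{\otimes n}$, each factor with basis $|0\rangle,\dots,|m-1\rangle,|\varnothing\rangle$, containing the input register space. $S=S_1\otimes\cdots\otimes S_n$, where $S_i$ is the unitary Hermitian operator on the $i$-th factor with $S_i(\tfrac1{\sqrt m}\sum_{y}|y\rangle)=|\varnothing\rangle$,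 $S_i|\varnothing\rangle=\tfrac1{\sqrt m}\sum_y|y\rangle$, and $S_i$ fixing $\tfrac1{\sqrt m}\sum_y\omega^{by}|y\rangle$ for $b\in\{1,\dots,m-1\}$. *)

theory Defs
  imports Complex_Main "HOL-Library.FuncSet"
begin

text \<open>Algorithm space: basis |i,b> with i < n (0-based index) and b < m.
  Vectors are functions from basis labels to complex numbers, operators are
  matrices (functions of two basis labels).\<close>

type_synonym avec = "nat \<times> nat \<Rightarrow> complex"
type_synonym amat = "nat \<times> nat \<Rightarrow> nat \<times> nat \<Rightarrow> complex"

definition alg_basis :: "nat \<Rightarrow> nat \<Rightarrow> (nat \<times> nat) set" where
  "alg_basis n m = {..<n} \<times> {..<m}"

definition mat_vec :: "(nat \<times> nat) set \<Rightarrow> amat \<Rightarrow> avec \<Rightarrow> avec" where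
  "mat_vec B M v = (\<lambda>p. \<Sum>q\<in>B. M p q * v q)"

definition unitary_on :: "(nat \<times> nat) set \<Rightarrow> amat \<Rightarrow> bool" where
  "unitary_on B M \<longleftrightarrow>
     (\<forall>p\<in>B. \<forall>q\<in>B. (\<Sum>r\<in>B. cnj (M r p) * M r q) = (if p = q then 1 else 0))"

definition omega :: "nat \<Rightarrow> complex" where
  "omega m = cis (2 * pi / real m)"

definition basis_vec :: "nat \<times> nat \<Rightarrow> avec" where
  "basis_vec p0 = (\<lambda>p. if p = p0 then 1 else 0)"

definition phase_oracle :: "nat \<Rightarrow> (nat \<Rightarrow> nat) \<Rightarrow> avec \<Rightarrow> avec" where
  "phase_oracle m x v = (\<lambda>(i, b). omega m ^ (b * x i) * v (i, b))"

fun alg_state :: "nat \<Rightarrow> nat \<Rightarrow> (nat \<Rightarrow> amat) \<Rightarrow> nat \<times> nat \<Rightarrow> (nat \<Rightarrow> nat) \<Rightarrow> nat \<Rightarrow> avec" where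
  "alg_state n m U init x 0 = mat_vec (alg_basis n m) (U 0) (basis_vec init)"
| "alg_state n m U init x (Suc t) =
     mat_vec (alg_basis n m) (U (Suc t)) (phase_oracle m x (alg_state n m U init x t))"

text \<open>Record space: each factor has basis |0>,...,|m-1>,|empty>; |k> is Some k, |empty> is None.\<close>
definition records :: "nat \<Rightarrow> nat \<Rightarrow> (nat \<Rightarrow> nat option) set" where
  "records n m = PiE {..<n} (\<lambda>_. insert None (Some ` {..<m}))"

definition inputs :: "nat \<Rightarrow> nat \<Rightarrow> (nat \<Rightarrow> nat) set" where
  "inputs n m = PiE {..<n} (\<lambda>_. {..<m})"

definition embed_input :: "nat \<Rightarrow> (nat \<Rightarrow> nat) \<Rightarrow> (nat \<Rightarrow> nat option)" where
  "embed_input n x = restrict (\<lambda>i. Some (x i)) {..<n}"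

type_synonym jvec = "(nat \<times> nat) \<times> (nat \<Rightarrow> nat option) \<Rightarrow> complex"

definition joint_state :: "nat \<Rightarrow> nat \<Rightarrow> (nat \<Rightarrow> amat) \<Rightarrow> nat \<times> nat \<Rightarrow> nat \<Rightarrow> jvec" where
  "joint_state n m U init t = (\<lambda>(a, y).
     \<Sum>x\<in>inputs n m. if y = embed_input n x
        then complex_of_real (1 / sqrt (real m ^ n)) * alg_state n m U init x t a else 0)"

definition rec_u :: "nat \<Rightarrow> nat option \<Rightarrow> complex" where
  "rec_u m y = (case y of Some k \<Rightarrow> complex_of_real (1 / sqrt (real m)) | None \<Rightarrow> 0)"

definition rec_null :: "nat option \<Rightarrow> complex" where
  "rec_null y = (case y of None \<Rightarrow> 1 | Some k \<Rightarrow> 0)"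

definition rec_fourier :: "nat \<Rightarrow> nat \<Rightarrow> nat option \<Rightarrow> complex" where
  "rec_fourier m b y = (case y of Some k \<Rightarrow> omega m ^ (b * k) / complex_of_real (sqrt (real m)) | None \<Rightarrow> 0)"

text \<open>S_i = |u><empty| + |empty><u| + sum_{b=1}^{m-1} |f_b><f_b| : swaps u and empty,
  fixes the Fourier vectors f_b, b = 1..m-1 (matrix entry S_i[y,z]).\<close>
definition S_loc :: "nat \<Rightarrow> nat option \<Rightarrow> nat option \<Rightarrow> complex" where
  "S_loc m y z = rec_u m y * cnj (rec_null z) + rec_null y * cnj (rec_u m z)
     + (\<Sum>b\<in>{1..<m}. rec_fourier m b y * cnj (rec_fourier m b z))"

definition apply_S :: "nat \<Rightarrow> nat \<Rightarrow> jvec \<Rightarrow> jvec" where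
  "apply_S n m \<Psi> = (\<lambda>(a, y). \<Sum>z\<in>records n m. (\<Prod>i<n. S_loc m (y i) (z i)) * \<Psi> (a, z))"

definition phi_state :: "nat \<Rightarrow> nat \<Rightarrow> (nat \<Rightarrow> amat) \<Rightarrow> nat \<times> nat \<Rightarrow> nat \<Rightarrow> jvec" where
  "phi_state n m U init t = apply_S n m (joint_state n m U init t)"

definition collision :: "nat \<Rightarrow> (nat \<Rightarrow> nat option) \<Rightarrow> bool" where
  "collision n y \<longleftrightarrow> (\<exists>i<n. \<exists>j<n. i \<noteq> j \<and> y i = y j \<and> y i \<noteq> None)"

definition Delta :: "nat \<Rightarrow> nat \<Rightarrow> (nat \<Rightarrow> amat) \<Rightarrow> nat \<times> nat \<Rightarrow> nat \<Rightarrow> real" where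
  "Delta n m U init t = sqrt (\<Sum>(a, y)\<in>alg_basis n m \<times> records n m.
      if collision n y then (cmod (phi_state n m U init t (a, y)))\<^sup>2 else 0)"

end

theory Submission
  imports Defs "HOL-Analysis.L2_Norm"
begin

text \<open>Conjugated by \<open>S\<close>, the phase oracle becomes the local unitary \<open>V\<^sub>b = S O\<^sub>b S\<close> acting on
  the record register selected by the query register \<open>|i,b\<rangle>\<close>, while the algorithm's unitaries act on
  the algorithm register only. Since \<open>S\<close> maps the uniform superposition to \<open>|\<emptyset>\<rangle>\<close>, the record
  starts empty and every query touches one register, so after \<open>t\<close> queries at most \<open>t\<close> registers
  are nonempty. Split \<open>\<phi>\<^sup>t\<close> into its collision part, of norm \<open>\<Delta>\<^sub>t\<close>, and its collision-free
  part; the query maps the former to a vector of norm \<open>\<Delta>\<^sub>t\<close>. From the latter a collision arises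
  only when register \<open>i\<close>, empty before, ends up holding one of the at most \<open>t\<close> recorded values \<open>k\<close>.
  That amplitude comes from the entries \<open>V\<^sub>b(k, c)\<close>, \<open>c \<noteq> k\<close>, whose squared moduli sum to at
  most \<open>10/m\<close>, so by Cauchy-Schwarz the new collisions have squared norm at most \<open>10t/m\<close>.\<close>

section \<open>Roots of unity\<close>

lemma omega_power: "omega m ^ k = cis (2 * pi * real k / real m)"
  unfolding omega_def DeMoivre by (simp add: field_simps)

lemma norm_omega_power [simp]: "cmod (omega m ^ k) = 1"
  by (simp add: omega_power)

lemma cnj_omega_power_mult [simp]: "cnj (omega m) ^ k * omega m ^ k = 1"
  by (simp add: omega_power cis_cnj cis_mult flip: complex_cnj_power)

lemma omega_power_root_of_unity: "m > 0 \<Longrightarrow> (omega m ^ k) ^ m = 1"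
  by (simp add: omega_power DeMoivre)

lemma omega_power_inj:
  assumes "j < m" "k < m" "omega m ^ j = omega m ^ k"
  shows "j = k"
proof -
  have "inj_on (\<lambda>k. cis (2 * pi * real k / real m)) {..<m}"
    using bij_betw_roots_unity[of m] assms(1) unfolding bij_betw_def by simp
  with assms show ?thesis
    unfolding omega_power by (auto dest: inj_onD)
qed

lemma sum_powers_root_of_unity:
  fixes z :: complex
  assumes "z ^ m = 1"
  shows "(\<Sum>b<m. z ^ b) = (if z = 1 then of_nat m else 0)"
  using assms by (simp add: sum_gp_strict)

lemma sum_omega_power_mult:
  assumes "0 < b" "b < m"
  shows "(\<Sum>j<m. omega m ^ (b * j)) = 0"
proof -
  have "omega m ^ b \<noteq> omega m ^ 0"
    using omega_power_inj[of b m 0] assms by auto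
  then show ?thesis
    using sum_powers_root_of_unity[OF omega_power_root_of_unity[of m b]] assms
    by (simp add: power_mult)
qed

section \<open>Unitary matrices over a finite index set\<close>

definition orthonormal_columns :: "'a set \<Rightarrow> 'b set \<Rightarrow> ('b \<Rightarrow> 'a \<Rightarrow> complex) \<Rightarrow> bool" where
  "orthonormal_columns A B M \<longleftrightarrow>
     (\<forall>q\<in>A. \<forall>q'\<in>A. (\<Sum>p\<in>B. cnj (M p q) * M p q') = (if q = q' then 1 else 0))"

lemma unitary_on_iff_orthonormal_columns: "unitary_on B M \<longleftrightarrow> orthonormal_columns B B M"
  unfolding unitary_on_def orthonormal_columns_def ..

lemma cnj_mult_self: "cnj z * z = complex_of_real ((cmod z)\<^sup>2)"
  by (metis complex_norm_square mult.commute)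

lemma orthonormal_columns_inner:
  assumes "finite A" "orthonormal_columns A B M"
  shows "(\<Sum>p\<in>B. cnj (\<Sum>q\<in>A. M p q * u q) * (\<Sum>q\<in>A. M p q * v q)) = (\<Sum>q\<in>A. cnj (u q) * v q)"
proof -
  have "(\<Sum>p\<in>B. cnj (\<Sum>q\<in>A. M p q * u q) * (\<Sum>q\<in>A. M p q * v q))
      = (\<Sum>p\<in>B. \<Sum>q\<in>A. \<Sum>q'\<in>A. cnj (u q) * v q' * (cnj (M p q) * M p q'))"
    unfolding cnj_sum sum_product by (simp add: ac_simps)
  also have "\<dots> = (\<Sum>q\<in>A. \<Sum>q'\<in>A. cnj (u q) * v q' * (\<Sum>p\<in>B. cnj (M p q) * M p q'))"
    unfolding sum_distrib_left by (subst sum.swap) (simp add: sum.swap[of _ B])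
  also have "\<dots> = (\<Sum>q\<in>A. \<Sum>q'\<in>A. if q = q' then cnj (u q) * v q' else 0)"
    using assms(2) unfolding orthonormal_columns_def by (intro sum.cong refl) auto
  also have "\<dots> = (\<Sum>q\<in>A. cnj (u q) * v q)"
    using assms(1) by simp
  finally show ?thesis .
qed

lemma orthonormal_columns_norm:
  assumes "finite A" "orthonormal_columns A B M"
  shows "(\<Sum>p\<in>B. (cmod (\<Sum>q\<in>A. M p q * v q))\<^sup>2) = (\<Sum>q\<in>A. (cmod (v q))\<^sup>2)"
  using orthonormal_columns_inner[OF assms, of v v]
  by (simp only: cnj_mult_self flip: of_real_sum) (simp only: of_real_eq_iff)

lemma orthonormal_columns_mult:
  assumes "finite A" "orthonormal_columns A B M" "orthonormal_columns C A N"
  shows "orthonormal_columns C B (\<lambda>p q. \<Sum>r\<in>A. M p r * N r q)"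
  using orthonormal_columns_inner[OF assms(1,2)] assms(3) unfolding orthonormal_columns_def by simp

lemma orthonormal_columns_mult_diag:
  assumes "orthonormal_columns A B M" "\<And>q. q \<in> A \<Longrightarrow> cmod (D q) = 1"
  shows "orthonormal_columns A B (\<lambda>p q. M p q * D q)"
  unfolding orthonormal_columns_def
proof (intro ballI)
  fix q q' assume q: "q \<in> A" "q' \<in> A"
  have "(\<Sum>p\<in>B. cnj (M p q * D q) * (M p q' * D q')) = cnj (D q) * D q' * (\<Sum>p\<in>B. cnj (M p q) * M p q')"
    by (simp add: sum_distrib_left ac_simps)
  also have "\<dots> = (if q = q' then 1 else 0)"
    using assms q unfolding orthonormal_columns_def by (simp add: complex_norm_square[symmetric] mult.commute)
  finally show "(\<Sum>p\<in>B. cnj (M p q * D q) * (M p q' * D q')) = (if q = q' then 1 else 0)" .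
qed

definition hermitian_on :: "'a set \<Rightarrow> ('a \<Rightarrow> 'a \<Rightarrow> complex) \<Rightarrow> bool" where
  "hermitian_on A S \<longleftrightarrow> (\<forall>p\<in>A. \<forall>q\<in>A. cnj (S p q) = S q p)"

definition involutory_on :: "'a set \<Rightarrow> ('a \<Rightarrow> 'a \<Rightarrow> complex) \<Rightarrow> bool" where
  "involutory_on A S \<longleftrightarrow> (\<forall>p\<in>A. \<forall>q\<in>A. (\<Sum>r\<in>A. S p r * S r q) = (if p = q then 1 else 0))"

lemma hermitian_involutory_orthonormal_columns:
  assumes "hermitian_on A S" "involutory_on A S"
  shows "orthonormal_columns A A S"
  using assms unfolding hermitian_on_def involutory_on_def orthonormal_columns_def
  by (metis (no_types, lifting) sum.cong)

lemma conj_diag_orthonormal_columns: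
  assumes "finite A" "hermitian_on A S" "involutory_on A S" "\<And>r. r \<in> A \<Longrightarrow> cmod (D r) = 1"
  shows "orthonormal_columns A A (\<lambda>p q. \<Sum>r\<in>A. S p r * D r * S r q)"
  using orthonormal_columns_mult[OF assms(1)
      orthonormal_columns_mult_diag[OF hermitian_involutory_orthonormal_columns[OF assms(2,3)] assms(4)]
      hermitian_involutory_orthonormal_columns[OF assms(2,3)]] .

lemma conj_diag_mult:
  assumes "finite A" "involutory_on A S" "k \<in> A"
  shows "(\<Sum>c\<in>A. (\<Sum>r\<in>A. S e r * D r * S r c) * S c k) = D k * S e k"
proof -
  have "(\<Sum>c\<in>A. (\<Sum>r\<in>A. S e r * D r * S r c) * S c k) = (\<Sum>r\<in>A. S e r * D r * (\<Sum>c\<in>A. S r c * S c k))"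
    unfolding sum_distrib_right sum_distrib_left by (subst sum.swap) (simp add: ac_simps)
  also have "\<dots> = (\<Sum>r\<in>A. if r = k then S e r * D r else 0)"
    using assms(2,3) unfolding involutory_on_def by (intro sum.cong refl) auto
  also have "\<dots> = D k * S e k"
    using assms(1,3) by simp
  finally show ?thesis .
qed

definition householder :: "('a \<Rightarrow> complex) \<Rightarrow> 'a \<Rightarrow> 'a \<Rightarrow> complex" where
  "householder w p q = (if p = q then 1 else 0) - w p * cnj (w q)"

lemma hermitian_householder: "hermitian_on A (householder w)"
  unfolding hermitian_on_def householder_def by (simp add: mult.commute)

lemma involutory_householder:
  assumes "finite A" "(\<Sum>r\<in>A. (cmod (w r))\<^sup>2) = 2"
  shows "involutory_on A (householder w)"
  unfolding involutory_on_def
proof (intro ballI)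
  fix p q assume pq: "p \<in> A" "q \<in> A"
  have w2: "(\<Sum>r\<in>A. cnj (w r) * w r) = 2"
    using assms(2) by (simp only: cnj_mult_self flip: of_real_sum) simp
  have "(\<Sum>r\<in>A. cnj (w r) * householder w r q)
      = (\<Sum>r\<in>A. (if r = q then cnj (w r) else 0) - cnj (w r) * w r * cnj (w q))"
    unfolding householder_def by (intro sum.cong refl) (simp add: algebra_simps)
  also have "\<dots> = - cnj (w q)"
    using assms(1) pq by (simp add: sum_subtractf w2 flip: sum_distrib_right)
  finally have col: "(\<Sum>r\<in>A. cnj (w r) * householder w r q) = - cnj (w q)" .
  have "(\<Sum>r\<in>A. householder w p r * householder w r q)
      = (\<Sum>r\<in>A. (if p = r then householder w r q else 0) - w p * (cnj (w r) * householder w r q))"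
    unfolding householder_def[of w p] by (intro sum.cong refl) (simp add: algebra_simps)
  also have "\<dots> = householder w p q - w p * (\<Sum>r\<in>A. cnj (w r) * householder w r q)"
    using assms(1) pq by (simp add: sum_subtractf sum_distrib_left)
  also have "\<dots> = (if p = q then 1 else 0)"
    unfolding col by (simp add: householder_def)
  finally show "(\<Sum>r\<in>A. householder w p r * householder w r q) = (if p = q then 1 else 0)" .
qed

section \<open>The swap and the query on one record register\<close>

definition rec_alphabet :: "nat \<Rightarrow> nat option set" where
  "rec_alphabet m = insert None (Some ` {..<m})"

lemma finite_rec_alphabet [simp]: "finite (rec_alphabet m)"
  by (simp add: rec_alphabet_def)

lemma None_in_rec_alphabet [simp]: "None \<in> rec_alphabet m"
  by (simp add: rec_alphabet_def)

lemma Some_in_rec_alphabet_iff [simp]: "Some k \<in> rec_alphabet m \<longleftrightarrow> k < m"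
  by (auto simp: rec_alphabet_def)

lemma sum_rec_alphabet: "(\<Sum>e\<in>rec_alphabet m. f e) = f None + (\<Sum>k<m. f (Some k))"
  unfolding rec_alphabet_def by (simp add: sum.reindex)

lemma S_loc_None_None [simp]: "S_loc m None None = 0"
  unfolding S_loc_def rec_u_def rec_null_def rec_fourier_def by simp

lemma S_loc_Some_None [simp]: "S_loc m (Some j) None = 1 / of_real (sqrt m)"
  unfolding S_loc_def rec_u_def rec_null_def rec_fourier_def by simp

lemma S_loc_None_Some [simp]: "S_loc m None (Some k) = 1 / of_real (sqrt m)"
  unfolding S_loc_def rec_u_def rec_null_def rec_fourier_def by simp

lemma S_loc_Some_Some:
  assumes "j < m" "k < m"
  shows "S_loc m (Some j) (Some k) = (if j = k then 1 else 0) - 1 / of_nat m"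
proof -
  define z where "z = omega m ^ j * cnj (omega m) ^ k"
  have "z ^ m = 1"
    using omega_power_root_of_unity[of m j] omega_power_root_of_unity[of m k] assms
    unfolding z_def power_mult_distrib by (simp flip: complex_cnj_power)
  moreover have "z = 1 \<longleftrightarrow> j = k"
  proof
    assume "z = 1"
    have "omega m ^ j = z * omega m ^ k"
      by (simp add: z_def mult.assoc)
    with \<open>z = 1\<close> show "j = k"
      using omega_power_inj assms by simp
  qed (metis cnj_omega_power_mult mult.commute z_def)
  ultimately have "(\<Sum>b<m. z ^ b) = (if j = k then of_nat m else 0)"
    by (simp add: sum_powers_root_of_unity)
  moreover have "(\<Sum>b<m. z ^ b) = 1 + (\<Sum>b\<in>{1..<m}. z ^ b)"
    using assms by (simp add: lessThan_atLeast0 sum.atLeast_Suc_lessThan)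
  moreover have "S_loc m (Some j) (Some k) = (\<Sum>b\<in>{1..<m}. z ^ b) / of_nat m"
  proof -
    have "omega m ^ (b * j) / of_real (sqrt m) * cnj (omega m ^ (b * k) / of_real (sqrt m)) = z ^ b / of_nat m"
      for b
      by (simp add: z_def power_mult_distrib power_mult mult.commute[of b] flip: of_real_mult)
    then show ?thesis
      by (simp add: S_loc_def rec_u_def rec_null_def rec_fourier_def sum_divide_distrib)
  qed
  ultimately show ?thesis
    using assms by (auto simp: field_simps)
qed

text \<open>\<open>S\<close> swaps \<open>u\<close> and \<open>|\<emptyset>\<rangle>\<close> and fixes everything orthogonal to both, so it is the reflection
  \<open>I - |w\<rangle>\<langle>w|\<close> along \<open>w = u - |\<emptyset>\<rangle>\<close>.\<close>
definition swap_axis :: "nat \<Rightarrow> nat option \<Rightarrow> complex" where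
  "swap_axis m e = (case e of None \<Rightarrow> -1 | Some _ \<Rightarrow> 1 / of_real (sqrt m))"

lemma S_loc_eq_householder:
  assumes "e \<in> rec_alphabet m" "c \<in> rec_alphabet m"
  shows "S_loc m e c = householder (swap_axis m) e c"
  using assms
  by (cases e; cases c)
    (auto simp: S_loc_Some_Some householder_def swap_axis_def rec_alphabet_def simp flip: of_real_mult)

lemma sum_norm_swap_axis: "m > 0 \<Longrightarrow> (\<Sum>e\<in>rec_alphabet m. (cmod (swap_axis m e))\<^sup>2) = 2"
  by (simp add: sum_rec_alphabet swap_axis_def norm_divide power_divide)

lemma hermitian_S_loc: "hermitian_on (rec_alphabet m) (S_loc m)"
  using hermitian_householder[of "rec_alphabet m" "swap_axis m"]
  unfolding hermitian_on_def by (simp add: S_loc_eq_householder)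

lemma involutory_S_loc: "m > 0 \<Longrightarrow> involutory_on (rec_alphabet m) (S_loc m)"
  using involutory_householder[OF finite_rec_alphabet sum_norm_swap_axis]
  unfolding involutory_on_def by (simp add: S_loc_eq_householder)

lemma sum_S_loc_uniform:
  assumes "m > 0" "e \<in> rec_alphabet m"
  shows "(\<Sum>k<m. S_loc m e (Some k)) = (if e = None then of_real (sqrt m) else 0)"
proof (cases e)
  case None
  have "of_nat m / of_real (sqrt m) = (of_real (sqrt m) :: complex)"
    using assms(1) by (simp add: field_simps flip: of_real_mult)
  then show ?thesis
    using None by simp
next
  case (Some j)
  then have "(\<Sum>k<m. S_loc m e (Some k)) = (\<Sum>k<m. (if j = k then 1 else 0) - 1 / of_nat m)"
    using assms(2) by (simp add: S_loc_Some_Some)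
  also have "\<dots> = 0"
    using assms(2) Some by (simp add: sum_subtractf)
  finally show ?thesis
    using Some by simp
qed

definition rec_phase :: "nat \<Rightarrow> nat \<Rightarrow> nat option \<Rightarrow> complex" where
  "rec_phase m b e = (case e of None \<Rightarrow> 1 | Some k \<Rightarrow> omega m ^ (b * k))"

lemma rec_phase_0 [simp]: "rec_phase m 0 = (\<lambda>_. 1)"
  by (simp add: fun_eq_iff rec_phase_def split: option.split)

definition rec_query :: "nat \<Rightarrow> nat \<Rightarrow> nat option \<Rightarrow> nat option \<Rightarrow> complex" where
  "rec_query m b e c = (\<Sum>d\<in>rec_alphabet m. S_loc m e d * rec_phase m b d * S_loc m d c)"

lemma orthonormal_columns_rec_query:
  "m > 0 \<Longrightarrow> orthonormal_columns (rec_alphabet m) (rec_alphabet m) (rec_query m b)"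
  using conj_diag_orthonormal_columns[OF finite_rec_alphabet hermitian_S_loc involutory_S_loc,
      of m "rec_phase m b"]
  unfolding rec_query_def[abs_def] by (simp add: rec_phase_def split: option.split)

lemma rec_query_S_loc:
  assumes "k < m"
  shows "(\<Sum>c\<in>rec_alphabet m. rec_query m b e c * S_loc m c (Some k)) = omega m ^ (b * k) * S_loc m e (Some k)"
  using conj_diag_mult[OF finite_rec_alphabet involutory_S_loc, of m "Some k"] assms
  unfolding rec_query_def by (simp add: rec_phase_def)

lemma rec_query_0:
  assumes "m > 0" "e \<in> rec_alphabet m" "c \<in> rec_alphabet m"
  shows "rec_query m 0 e c = (if e = c then 1 else 0)"
  using involutory_S_loc[OF assms(1)] assms(2,3)
  unfolding rec_query_def involutory_on_def by simp

lemma rec_query_Some_None: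
  assumes "0 < b" "b < m" "k < m"
  shows "rec_query m b (Some k) None = omega m ^ (b * k) / of_real (sqrt m)"
proof -
  have "S_loc m (Some k) (Some d) * rec_phase m b (Some d) * S_loc m (Some d) None
      = ((if d = k then omega m ^ (b * d) else 0) - omega m ^ (b * d) / of_nat m) / of_real (sqrt m)"
    if "d < m" for d
    using that assms by (simp add: S_loc_Some_Some rec_phase_def field_simps)
  then have "rec_query m b (Some k) None
      = (\<Sum>d<m. (if d = k then omega m ^ (b * d) else 0) - omega m ^ (b * d) / of_nat m) / of_real (sqrt m)"
    unfolding rec_query_def sum_rec_alphabet sum_divide_distrib by simp
  also have "\<dots> = omega m ^ (b * k) / of_real (sqrt m)"
    using assms by (simp add: sum_subtractf sum_omega_power_mult flip: sum_divide_distrib)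
  finally show ?thesis .
qed

lemma rec_query_Some_Some:
  assumes "0 < b" "b < m" "k < m" "d < m" "k \<noteq> d"
  shows "rec_query m b (Some k) (Some d) = (1 - omega m ^ (b * k) - omega m ^ (b * d)) / of_nat m"
proof -
  have m: "of_nat m \<noteq> (0 :: complex)"
    using assms by simp
  have "S_loc m (Some k) (Some r) * rec_phase m b (Some r) * S_loc m (Some r) (Some d)
      = (if r = k then - (omega m ^ (b * k)) / of_nat m else 0)
        + (if r = d then - (omega m ^ (b * d)) / of_nat m else 0) + omega m ^ (b * r) / (of_nat m)\<^sup>2"
    if "r < m" for r
    using that assms m
    by (cases "r = k"; cases "r = d") (simp_all add: S_loc_Some_Some rec_phase_def field_simps power2_eq_square)
  then have "rec_query m b (Some k) (Some d)
      = 1 / of_nat m + (\<Sum>r<m. (if r = k then - (omega m ^ (b * k)) / of_nat m else 0)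
          + (if r = d then - (omega m ^ (b * d)) / of_nat m else 0) + omega m ^ (b * r) / (of_nat m)\<^sup>2)"
    unfolding rec_query_def sum_rec_alphabet by (simp add: rec_phase_def flip: of_real_mult)
  also have "\<dots> = (1 - omega m ^ (b * k) - omega m ^ (b * d)) / of_nat m"
    using assms by (simp add: sum.distrib sum_omega_power_mult diff_divide_distrib flip: sum_divide_distrib)
  finally show ?thesis .
qed

lemma rec_query_row_bound:
  assumes "b < m" "k < m"
  shows "(\<Sum>c\<in>rec_alphabet m - {Some k}. (cmod (rec_query m b (Some k) c))\<^sup>2) \<le> 10 / real m"
proof (cases "b = 0")
  case True
  have "(\<Sum>c\<in>rec_alphabet m - {Some k}. (cmod (rec_query m b (Some k) c))\<^sup>2) = 0"
    using assms by (intro sum.neutral) (auto simp: True rec_query_0)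
  then show ?thesis
    by simp
next
  case False
  have off_diag: "(cmod (rec_query m b (Some k) (Some d)))\<^sup>2 \<le> 9 / (real m)\<^sup>2"
    if "d \<in> {..<m} - {k}" for d
  proof -
    have "cmod (1 - omega m ^ (b * k) - omega m ^ (b * d)) \<le> cmod (1 - omega m ^ (b * k)) + 1"
      using norm_triangle_ineq4[of "1 - omega m ^ (b * k)" "omega m ^ (b * d)"] by simp
    also have "cmod (1 - omega m ^ (b * k)) \<le> 2"
      using norm_triangle_ineq4[of 1 "omega m ^ (b * k)"] by simp
    finally have "cmod (rec_query m b (Some k) (Some d)) \<le> 3 / m"
      using that assms False by (simp add: rec_query_Some_Some norm_divide divide_right_mono)
    then have "(cmod (rec_query m b (Some k) (Some d)))\<^sup>2 \<le> (3 / m)\<^sup>2"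
      by (simp add: power_mono)
    then show ?thesis
      by (simp add: power_divide)
  qed
  have "rec_alphabet m - {Some k} = insert None (Some ` ({..<m} - {k}))"
    by (auto simp: rec_alphabet_def)
  then have "(\<Sum>c\<in>rec_alphabet m - {Some k}. (cmod (rec_query m b (Some k) c))\<^sup>2)
      = 1 / m + (\<Sum>d\<in>{..<m} - {k}. (cmod (rec_query m b (Some k) (Some d)))\<^sup>2)"
    using assms False by (simp add: sum.reindex rec_query_Some_None norm_divide power_divide)
  also have "\<dots> \<le> 1 / m + real (card ({..<m} - {k})) * (9 / (real m)\<^sup>2)"
    using sum_bounded_above[of "{..<m} - {k}", OF off_diag] by simp
  also have "\<dots> \<le> 1 / m + real m * (9 / (real m)\<^sup>2)"
    by (intro add_left_mono mult_right_mono) (simp_all add: card_Diff_singleton_if)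
  also have "\<dots> = 10 / real m"
    using assms by (simp add: field_simps power2_eq_square)
  finally show ?thesis .
qed

section \<open>The joint state in the record basis\<close>

lemma records_eq: "records n m = (\<Pi>\<^sub>E i\<in>{..<n}. rec_alphabet m)"
  unfolding records_def rec_alphabet_def ..

lemma finite_records [simp]: "finite (records n m)"
  by (simp add: records_eq finite_PiE)

lemma finite_alg_basis [simp]: "finite (alg_basis n m)"
  by (simp add: alg_basis_def)

lemma embed_input_in_records: "x \<in> inputs n m \<Longrightarrow> embed_input n x \<in> records n m"
  unfolding inputs_def records_eq embed_input_def by (auto simp: PiE_iff)

lemma records_in_rec_alphabet: "y \<in> records n m \<Longrightarrow> i < n \<Longrightarrow> y i \<in> rec_alphabet m"
  unfolding records_eq by (auto simp: PiE_iff)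

lemma inputs_less: "x \<in> inputs n m \<Longrightarrow> i < n \<Longrightarrow> x i < m"
  unfolding inputs_def by (auto simp: PiE_iff)

lemma records_update:
  "y \<in> records n m \<Longrightarrow> i < n \<Longrightarrow> e \<in> rec_alphabet m \<Longrightarrow> y(i := e) \<in> records n m"
  unfolding records_eq by (auto simp: PiE_iff extensional_def)

lemma sum_records_update:
  assumes "i < n"
  shows "(\<Sum>y\<in>records n m. f y) = (\<Sum>y\<in>{y\<in>records n m. y i = None}. \<Sum>e\<in>rec_alphabet m. f (y(i := e)))"
proof -
  have "(\<Sum>y\<in>records n m. f y) = (\<Sum>(y, e)\<in>{y\<in>records n m. y i = None} \<times> rec_alphabet m. f (y(i := e)))"
    by (rule sum.reindex_bij_witness[where i = "\<lambda>(y, e). y(i := e)" and j = "\<lambda>y. (y(i := None), y i)"])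
      (auto simp: assms records_update records_in_rec_alphabet)
  then show ?thesis
    by (simp add: sum.cartesian_product)
qed

definition rec_kernel :: "nat \<Rightarrow> nat \<Rightarrow> (nat \<Rightarrow> nat option) \<Rightarrow> (nat \<Rightarrow> nat) \<Rightarrow> complex" where
  "rec_kernel n m y x = (\<Prod>i<n. S_loc m (y i) (Some (x i)))"

lemma phi_state_eq:
  "phi_state n m U init t (a, y) =
     of_real (1 / sqrt (real m ^ n)) * (\<Sum>x\<in>inputs n m. rec_kernel n m y x * alg_state n m U init x t a)"
proof -
  let ?c = "complex_of_real (1 / sqrt (real m ^ n))"
  have "phi_state n m U init t (a, y) = (\<Sum>z\<in>records n m. \<Sum>x\<in>inputs n m.
      if z = embed_input n x then (\<Prod>i<n. S_loc m (y i) (z i)) * (?c * alg_state n m U init x t a) else 0)"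
    unfolding phi_state_def apply_S_def joint_state_def
    by (simp add: sum_distrib_left if_distrib cong: if_cong)
  also have "\<dots> = (\<Sum>x\<in>inputs n m. rec_kernel n m y x * (?c * alg_state n m U init x t a))"
    unfolding rec_kernel_def
    by (subst sum.swap, intro sum.cong refl) (simp add: embed_input_in_records, simp add: embed_input_def)
  finally show ?thesis
    by (simp add: sum_distrib_left ac_simps)
qed

definition record_query :: "nat \<Rightarrow> jvec \<Rightarrow> jvec" where
  "record_query m F = (\<lambda>((i, b), y). \<Sum>c\<in>rec_alphabet m. rec_query m b (y i) c * F ((i, b), y(i := c)))"

definition alg_apply :: "(nat \<times> nat) set \<Rightarrow> amat \<Rightarrow> jvec \<Rightarrow> jvec" where
  "alg_apply B M F = (\<lambda>(a', y). \<Sum>a\<in>B. M a' a * F (a, y))"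

lemma rec_kernel_update:
  assumes "i < n"
  shows "rec_kernel n m (y(i := c)) x = S_loc m c (Some (x i)) * (\<Prod>j\<in>{..<n} - {i}. S_loc m (y j) (Some (x j)))"
proof -
  have "rec_kernel n m (y(i := c)) x = S_loc m c (Some (x i)) * (\<Prod>j\<in>{..<n} - {i}. S_loc m ((y(i := c)) j) (Some (x j)))"
    unfolding rec_kernel_def using assms by (subst prod.remove[of _ i]) auto
  also have "(\<Prod>j\<in>{..<n} - {i}. S_loc m ((y(i := c)) j) (Some (x j))) = (\<Prod>j\<in>{..<n} - {i}. S_loc m (y j) (Some (x j)))"
    by (rule prod.cong) auto
  finally show ?thesis .
qed

lemma rec_query_rec_kernel:
  assumes "i < n" "x \<in> inputs n m"
  shows "(\<Sum>c\<in>rec_alphabet m. rec_query m b (y i) c * rec_kernel n m (y(i := c)) x) = omega m ^ (b * x i) * rec_kernel n m y x"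
proof -
  let ?rest = "\<Prod>j\<in>{..<n} - {i}. S_loc m (y j) (Some (x j))"
  have "(\<Sum>c\<in>rec_alphabet m. rec_query m b (y i) c * rec_kernel n m (y(i := c)) x)
      = (\<Sum>c\<in>rec_alphabet m. rec_query m b (y i) c * S_loc m c (Some (x i))) * ?rest"
    unfolding rec_kernel_update[OF assms(1)] sum_distrib_right by (simp add: mult.assoc)
  also have "\<dots> = omega m ^ (b * x i) * (S_loc m (y i) (Some (x i)) * ?rest)"
    using rec_query_S_loc[OF inputs_less[OF assms(2,1)]] by simp
  also have "\<dots> = omega m ^ (b * x i) * rec_kernel n m y x"
    using rec_kernel_update[OF assms(1), where c = "y i" and y = y] by simp
  finally show ?thesis .
qed

lemma record_query_phi_state:
  assumes "i < n"
  shows "record_query m (phi_state n m U init t) ((i, b), y) = of_real (1 / sqrt (real m ^ n)) *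
    (\<Sum>x\<in>inputs n m. rec_kernel n m y x * (omega m ^ (b * x i) * alg_state n m U init x t (i, b)))"
proof -
  have "record_query m (phi_state n m U init t) ((i, b), y) = of_real (1 / sqrt (real m ^ n)) *
      (\<Sum>x\<in>inputs n m. (\<Sum>c\<in>rec_alphabet m. rec_query m b (y i) c * rec_kernel n m (y(i := c)) x)
        * alg_state n m U init x t (i, b))"
    unfolding record_query_def phi_state_eq
    by (simp add: sum_distrib_left sum_distrib_right sum.swap[of _ "rec_alphabet m"] ac_simps)
  then show ?thesis
    using assms by (simp add: rec_query_rec_kernel ac_simps cong: sum.cong)
qed

lemma phi_state_Suc:
  "phi_state n m U init (Suc t) = alg_apply (alg_basis n m) (U (Suc t)) (record_query m (phi_state n m U init t))"
proof (intro ext, clarify)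
  fix a' y
  have "phi_state n m U init (Suc t) (a', y) = (\<Sum>q\<in>alg_basis n m. U (Suc t) a' q *
      (of_real (1 / sqrt (real m ^ n)) * (\<Sum>x\<in>inputs n m. rec_kernel n m y x *
        (omega m ^ (snd q * x (fst q)) * alg_state n m U init x t q))))"
    unfolding phi_state_eq
    by (simp add: mat_vec_def phase_oracle_def case_prod_beta sum_distrib_left
        sum.swap[of _ "alg_basis n m"] ac_simps)
  also have "\<dots> = alg_apply (alg_basis n m) (U (Suc t)) (record_query m (phi_state n m U init t)) (a', y)"
    unfolding alg_apply_def
    by (auto simp: alg_basis_def record_query_phi_state intro!: sum.cong)
  finally show "phi_state n m U init (Suc t) (a', y) =
      alg_apply (alg_basis n m) (U (Suc t)) (record_query m (phi_state n m U init t)) (a', y)" .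
qed

definition empty_record :: "nat \<Rightarrow> nat \<Rightarrow> nat option" where
  "empty_record n = (\<lambda>i\<in>{..<n}. None)"

lemma empty_record_in_records [simp]: "empty_record n \<in> records n m"
  by (simp add: empty_record_def records_eq)

lemma eq_empty_record_iff: "y \<in> records n m \<Longrightarrow> y = empty_record n \<longleftrightarrow> (\<forall>i<n. y i = None)"
  unfolding records_eq empty_record_def by (auto simp: PiE_iff extensional_def fun_eq_iff)

lemma phi_state_0:
  assumes "m > 0" "y \<in> records n m"
  shows "phi_state n m U init 0 (a, y) =
    (if y = empty_record n then mat_vec (alg_basis n m) (U 0) (basis_vec init) a else 0)"
proof -
  have "(\<Sum>x\<in>inputs n m. rec_kernel n m y x) = (\<Prod>i<n. \<Sum>k<m. S_loc m (y i) (Some k))"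
    unfolding rec_kernel_def inputs_def by (subst prod_sum_PiE) auto
  also have "\<dots> = (\<Prod>i<n. if y i = None then of_real (sqrt m) else 0)"
    using assms by (intro prod.cong refl) (simp add: sum_S_loc_uniform records_in_rec_alphabet)
  also have "\<dots> = (if \<forall>i<n. y i = None then of_real (sqrt (real m ^ n)) else 0)"
  proof (cases "\<forall>i<n. y i = None")
    case False
    then obtain i where "i < n" "y i \<noteq> None"
      by blast
    then have "(\<Prod>i<n. if y i = None then of_real (sqrt m) else 0) = (0 :: complex)"
      by (intro prod_zero bexI[of _ i]) auto
    then show ?thesis
      by (simp only: if_not_P[OF False])
  qed (simp add: real_sqrt_power)
  finally show ?thesis
    using assms by (auto simp: phi_state_eq eq_empty_record_iff simp flip: sum_distrib_right)
qed

definition rec_support :: "nat \<Rightarrow> (nat \<Rightarrow> nat option) \<Rightarrow> nat set" where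
  "rec_support n y = {i. i < n \<and> y i \<noteq> None}"

lemma finite_rec_support [simp]: "finite (rec_support n y)"
  by (simp add: rec_support_def)

lemma card_rec_support_update: "card (rec_support n y) \<le> Suc (card (rec_support n (y(i := c))))"
proof -
  have "card (rec_support n y) \<le> card (insert i (rec_support n (y(i := c))))"
    by (intro card_mono) (auto simp: rec_support_def)
  also have "\<dots> \<le> Suc (card (rec_support n (y(i := c))))"
    by (simp add: card_insert_le_m1)
  finally show ?thesis .
qed

lemma phi_state_eq_0_if_card_rec_support:
  assumes "m > 0"
  shows "y \<in> records n m \<Longrightarrow> t < card (rec_support n y) \<Longrightarrow> phi_state n m U init t (a, y) = 0"
proof (induction t arbitrary: a y)
  case 0
  then have "y \<noteq> empty_record n"
    by (auto simp: rec_support_def card_gt_0_iff eq_empty_record_iff)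
  then show ?case
    unfolding phi_state_0[OF assms 0(1)] by (rule if_not_P)
next
  case (Suc t)
  have "phi_state n m U init t ((i, b), y(i := c)) = 0"
    if "i < n" "c \<in> rec_alphabet m" for i b c
  proof (rule Suc.IH)
    show "y(i := c) \<in> records n m"
      using Suc.prems(1) that by (rule records_update)
    show "t < card (rec_support n (y(i := c)))"
      using Suc.prems(2) card_rec_support_update[of n y i c] by simp
  qed
  then show ?case
    by (auto simp: phi_state_Suc alg_apply_def record_query_def alg_basis_def intro!: sum.neutral)
qed

section \<open>Norms of joint vectors\<close>

definition joint_norm :: "nat \<Rightarrow> nat \<Rightarrow> jvec \<Rightarrow> real" where
  "joint_norm n m F = L2_set (\<lambda>p. cmod (F p)) (alg_basis n m \<times> records n m)"

lemma joint_norm_eq: "joint_norm n m F = sqrt (\<Sum>a\<in>alg_basis n m. \<Sum>y\<in>records n m. (cmod (F (a, y)))\<^sup>2)"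
  unfolding joint_norm_def L2_set_def by (simp add: sum.cartesian_product case_prod_beta)

lemma joint_norm_add_le: "joint_norm n m (\<lambda>p. F p + G p) \<le> joint_norm n m F + joint_norm n m G"
proof -
  have "joint_norm n m (\<lambda>p. F p + G p) \<le> L2_set (\<lambda>p. cmod (F p) + cmod (G p)) (alg_basis n m \<times> records n m)"
    unfolding joint_norm_def by (rule L2_set_mono) (auto simp: norm_triangle_ineq)
  also have "\<dots> \<le> joint_norm n m F + joint_norm n m G"
    unfolding joint_norm_def by (rule L2_set_triangle_ineq)
  finally show ?thesis .
qed

lemma joint_norm_mono: "(\<And>p. cmod (F p) \<le> cmod (G p)) \<Longrightarrow> joint_norm n m F \<le> joint_norm n m G"
  unfolding joint_norm_def by (rule L2_set_mono) auto

lemma joint_norm_alg_apply: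
  assumes "unitary_on (alg_basis n m) M"
  shows "joint_norm n m (alg_apply (alg_basis n m) M F) = joint_norm n m F"
proof -
  have "(\<Sum>a'\<in>alg_basis n m. (cmod (\<Sum>a\<in>alg_basis n m. M a' a * F (a, y)))\<^sup>2)
      = (\<Sum>a\<in>alg_basis n m. (cmod (F (a, y)))\<^sup>2)" for y
    using assms by (simp add: orthonormal_columns_norm unitary_on_iff_orthonormal_columns)
  then have "(\<Sum>y\<in>records n m. \<Sum>a'\<in>alg_basis n m. (cmod (alg_apply (alg_basis n m) M F (a', y)))\<^sup>2)
      = (\<Sum>y\<in>records n m. \<Sum>a\<in>alg_basis n m. (cmod (F (a, y)))\<^sup>2)"
    by (simp add: alg_apply_def)
  then show ?thesis
    unfolding joint_norm_eq sum.swap[of _ "alg_basis n m"] by (rule arg_cong[where f = sqrt])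
qed

lemma joint_norm_record_query:
  assumes "m > 0"
  shows "joint_norm n m (record_query m F) = joint_norm n m F"
proof -
  have fixed_register: "(\<Sum>y\<in>records n m. (cmod (record_query m F ((i, b), y)))\<^sup>2)
      = (\<Sum>y\<in>records n m. (cmod (F ((i, b), y)))\<^sup>2)"
    if "i < n" for i b
  proof -
    have "(\<Sum>e\<in>rec_alphabet m. (cmod (\<Sum>c\<in>rec_alphabet m. rec_query m b e c * F ((i, b), y(i := c))))\<^sup>2)
        = (\<Sum>c\<in>rec_alphabet m. (cmod (F ((i, b), y(i := c))))\<^sup>2)" for y
      using assms by (simp add: orthonormal_columns_norm orthonormal_columns_rec_query)
    then show ?thesis
      unfolding sum_records_update[OF that] by (simp add: record_query_def)
  qed
  have "(\<Sum>a\<in>alg_basis n m. \<Sum>y\<in>records n m. (cmod (record_query m F (a, y)))\<^sup>2)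
      = (\<Sum>a\<in>alg_basis n m. \<Sum>y\<in>records n m. (cmod (F (a, y)))\<^sup>2)"
    by (rule sum.cong[OF refl]) (auto simp: alg_basis_def fixed_register)
  then show ?thesis
    unfolding joint_norm_eq by simp
qed

lemma joint_norm_phi_state:
  assumes "m > 0" "\<forall>k\<le>T. unitary_on (alg_basis n m) (U k)" "init \<in> alg_basis n m"
  shows "t \<le> T \<Longrightarrow> joint_norm n m (phi_state n m U init t) = 1"
proof (induction t)
  case 0
  let ?\<psi> = "mat_vec (alg_basis n m) (U 0) (basis_vec init)"
  have "(\<Sum>y\<in>records n m. (cmod (phi_state n m U init 0 (a, y)))\<^sup>2)
      = (\<Sum>y\<in>records n m. if y = empty_record n then (cmod (?\<psi> a))\<^sup>2 else 0)" for a
    using assms(1) by (intro sum.cong refl) (simp add: phi_state_0)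
  then have "(\<Sum>y\<in>records n m. (cmod (phi_state n m U init 0 (a, y)))\<^sup>2) = (cmod (?\<psi> a))\<^sup>2" for a
    by simp
  moreover have "(\<Sum>a\<in>alg_basis n m. (cmod (?\<psi> a))\<^sup>2) = (\<Sum>q\<in>alg_basis n m. (cmod (basis_vec init q))\<^sup>2)"
    using assms(2) unfolding mat_vec_def
    by (simp add: orthonormal_columns_norm unitary_on_iff_orthonormal_columns)
  moreover have "(\<Sum>q\<in>alg_basis n m. (cmod (basis_vec init q))\<^sup>2) = 1"
    using assms(3) by (simp add: basis_vec_def if_distrib[of "\<lambda>z. (cmod z)\<^sup>2"] cong: if_cong)
  ultimately show ?case
    unfolding joint_norm_eq by simp
next
  case (Suc t)
  then show ?case
    using assms by (simp add: phi_state_Suc joint_norm_alg_apply joint_norm_record_query)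
qed

section \<open>Collisions created by one query\<close>

lemma norm_sum_mult_sq_le:
  fixes a b :: "'a \<Rightarrow> 'b::real_normed_div_algebra"
  shows "(norm (\<Sum>c\<in>C. a c * b c))\<^sup>2 \<le> (\<Sum>c\<in>C. (norm (a c))\<^sup>2) * (\<Sum>c\<in>C. (norm (b c))\<^sup>2)"
proof -
  have "norm (\<Sum>c\<in>C. a c * b c) \<le> (\<Sum>c\<in>C. \<bar>norm (a c)\<bar> * \<bar>norm (b c)\<bar>)"
    by (rule order_trans[OF norm_sum]) (simp add: norm_mult)
  also have "\<dots> \<le> L2_set (\<lambda>c. norm (a c)) C * L2_set (\<lambda>c. norm (b c)) C"
    by (rule L2_set_mult_ineq)
  finally have "(norm (\<Sum>c\<in>C. a c * b c))\<^sup>2 \<le> (L2_set (\<lambda>c. norm (a c)) C * L2_set (\<lambda>c. norm (b c)) C)\<^sup>2"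
    by (simp add: power_mono)
  also have "\<dots> = (\<Sum>c\<in>C. (norm (a c))\<^sup>2) * (\<Sum>c\<in>C. (norm (b c))\<^sup>2)"
    unfolding L2_set_def power_mult_distrib by (simp add: sum_nonneg)
  finally show ?thesis .
qed

lemma rec_query_mult_sq_le:
  assumes "b < m" "k < m" "g (Some k) = 0"
  shows "(cmod (\<Sum>c\<in>rec_alphabet m. rec_query m b (Some k) c * g c))\<^sup>2
    \<le> 10 / real m * (\<Sum>c\<in>rec_alphabet m. (cmod (g c))\<^sup>2)"
proof -
  let ?A = "rec_alphabet m - {Some k}"
  have "(\<Sum>c\<in>rec_alphabet m. rec_query m b (Some k) c * g c) = (\<Sum>c\<in>?A. rec_query m b (Some k) c * g c)"
    using assms by (simp add: sum.remove[of _ "Some k"])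
  then have "(cmod (\<Sum>c\<in>rec_alphabet m. rec_query m b (Some k) c * g c))\<^sup>2
      \<le> (\<Sum>c\<in>?A. (cmod (rec_query m b (Some k) c))\<^sup>2) * (\<Sum>c\<in>?A. (cmod (g c))\<^sup>2)"
    by (simp add: norm_sum_mult_sq_le)
  also have "\<dots> \<le> 10 / real m * (\<Sum>c\<in>rec_alphabet m. (cmod (g c))\<^sup>2)"
    using assms by (intro mult_mono rec_query_row_bound sum_mono2) (auto intro: sum_nonneg)
  finally show ?thesis .
qed

lemma collision_update_None: "collision n y \<Longrightarrow> y i = None \<Longrightarrow> collision n (y(i := c))"
  unfolding collision_def by (metis fun_upd_other)

lemma new_collision_in_image:
  assumes "\<not> collision n y" "collision n (y(i := e))"
  shows "e \<in> y ` rec_support n y"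
proof -
  obtain j k where jk: "j < n" "k < n" "j \<noteq> k" "(y(i := e)) j = (y(i := e)) k" "(y(i := e)) j \<noteq> None"
    using assms(2) unfolding collision_def by blast
  have "j = i \<or> k = i"
    using assms(1) jk unfolding collision_def by (metis fun_upd_other)
  then show ?thesis
    using jk by (auto simp: rec_support_def split: if_splits intro: rev_image_eqI)
qed

definition collision_part :: "nat \<Rightarrow> jvec \<Rightarrow> jvec" where
  "collision_part n F = (\<lambda>(a, y). if collision n y then F (a, y) else 0)"

definition collision_free_part :: "nat \<Rightarrow> jvec \<Rightarrow> jvec" where
  "collision_free_part n F = (\<lambda>(a, y). if collision n y then 0 else F (a, y))"

lemma sum_collision_part_query_le:
  assumes "b < m" "y i = None"
    and "\<And>c. c \<in> rec_alphabet m \<Longrightarrow> g c \<noteq> 0 \<Longrightarrow>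
      \<not> collision n (y(i := c)) \<and> card (rec_support n (y(i := c))) \<le> t"
  shows "(\<Sum>e\<in>rec_alphabet m. (cmod (if collision n (y(i := e))
      then \<Sum>c\<in>rec_alphabet m. rec_query m b e c * g c else 0))\<^sup>2)
    \<le> 10 * real t / real m * (\<Sum>c\<in>rec_alphabet m. (cmod (g c))\<^sup>2)"
proof (cases "\<forall>c\<in>rec_alphabet m. g c = 0")
  case True
  then have zero: "(\<Sum>c\<in>rec_alphabet m. rec_query m b e c * g c) = 0" for e
    by (intro sum.neutral) simp
  show ?thesis
    by (simp add: zero sum_nonneg cong: if_cong)
next
  case False
  then obtain c0 where c0: "c0 \<in> rec_alphabet m" "g c0 \<noteq> 0"
    by blast
  define K where "K = {e\<in>rec_alphabet m. collision n (y(i := e))}"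
  have "\<not> collision n y"
    using assms(2) assms(3)[OF c0] collision_update_None by blast
  then have "K \<subseteq> y ` rec_support n y"
    unfolding K_def using new_collision_in_image by blast
  moreover have "rec_support n y \<subseteq> rec_support n (y(i := c0))"
    using assms(2) by (auto simp: rec_support_def)
  ultimately have "card K \<le> t"
    using assms(3)[OF c0] card_image_le[of "rec_support n y" y]
      card_mono[of "y ` rec_support n y" K] card_mono[of "rec_support n (y(i := c0))" "rec_support n y"]
    by simp
  let ?S = "\<Sum>c\<in>rec_alphabet m. (cmod (g c))\<^sup>2"
  have "(cmod (\<Sum>c\<in>rec_alphabet m. rec_query m b e c * g c))\<^sup>2 \<le> 10 / real m * ?S" if e: "e \<in> K" for e
  proof -
    obtain k where "e = Some k" "k < m"
      using e \<open>K \<subseteq> y ` rec_support n y\<close> unfolding K_def rec_support_def by auto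
    moreover have "g e = 0"
      using e assms(3) unfolding K_def by blast
    ultimately show ?thesis
      using assms(1) rec_query_mult_sq_le by simp
  qed
  then have "(\<Sum>e\<in>K. (cmod (\<Sum>c\<in>rec_alphabet m. rec_query m b e c * g c))\<^sup>2) \<le> real (card K) * (10 / real m * ?S)"
    by (rule sum_bounded_above)
  also have "\<dots> \<le> real t * (10 / real m * ?S)"
    using \<open>card K \<le> t\<close> by (intro mult_right_mono) (simp_all add: sum_nonneg)
  also have "\<dots> = 10 * real t / real m * ?S"
    by simp
  finally show ?thesis
    unfolding K_def by (simp add: sum.inter_filter if_distrib[of "\<lambda>z. (cmod z)\<^sup>2"] cong: if_cong)
qed

lemma joint_norm_collision_part_record_query_le:
  assumes "m > 0"
    and vanish: "\<And>a y. a \<in> alg_basis n m \<Longrightarrow> y \<in> records n m \<Longrightarrow>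
      collision n y \<or> t < card (rec_support n y) \<Longrightarrow> G (a, y) = 0"
  shows "joint_norm n m (collision_part n (record_query m G)) \<le> sqrt (10 * real t / real m) * joint_norm n m G"
proof -
  have fixed_register: "(\<Sum>y\<in>records n m. (cmod (collision_part n (record_query m G) ((i, b), y)))\<^sup>2)
      \<le> 10 * real t / real m * (\<Sum>y\<in>records n m. (cmod (G ((i, b), y)))\<^sup>2)"
    if "(i, b) \<in> alg_basis n m" for i b
  proof -
    have i: "i < n" and b: "b < m"
      using that by (auto simp: alg_basis_def)
    let ?R = "{y \<in> records n m. y i = None}"
    have "(\<Sum>y\<in>records n m. (cmod (collision_part n (record_query m G) ((i, b), y)))\<^sup>2)
        = (\<Sum>y\<in>?R. \<Sum>e\<in>rec_alphabet m. (cmod (if collision n (y(i := e))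
            then \<Sum>c\<in>rec_alphabet m. rec_query m b e c * G ((i, b), y(i := c)) else 0))\<^sup>2)"
      unfolding sum_records_update[OF i] by (simp add: collision_part_def record_query_def cong: if_cong)
    also have "\<dots> \<le> (\<Sum>y\<in>?R. 10 * real t / real m * (\<Sum>c\<in>rec_alphabet m. (cmod (G ((i, b), y(i := c))))\<^sup>2))"
    proof (rule sum_mono)
      fix y assume "y \<in> ?R"
      then show "(\<Sum>e\<in>rec_alphabet m. (cmod (if collision n (y(i := e))
            then \<Sum>c\<in>rec_alphabet m. rec_query m b e c * G ((i, b), y(i := c)) else 0))\<^sup>2)
          \<le> 10 * real t / real m * (\<Sum>c\<in>rec_alphabet m. (cmod (G ((i, b), y(i := c))))\<^sup>2)"
        using b vanish[OF that records_update[OF _ i]]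
        by (intro sum_collision_part_query_le) (auto intro: leI)
    qed
    also have "\<dots> = 10 * real t / real m * (\<Sum>y\<in>records n m. (cmod (G ((i, b), y)))\<^sup>2)"
      unfolding sum_records_update[OF i, of "\<lambda>y. (cmod (G ((i, b), y)))\<^sup>2"] by (rule sum_distrib_left[symmetric])
    finally show ?thesis .
  qed
  have "(\<Sum>a\<in>alg_basis n m. \<Sum>y\<in>records n m. (cmod (collision_part n (record_query m G) (a, y)))\<^sup>2)
      \<le> 10 * real t / real m * (\<Sum>a\<in>alg_basis n m. \<Sum>y\<in>records n m. (cmod (G (a, y)))\<^sup>2)"
    unfolding sum_distrib_left[of _ _ "alg_basis n m"]
    using fixed_register[of "fst a" "snd a" for a] by (intro sum_mono) simp
  then show ?thesis
    unfolding joint_norm_eq by (metis real_sqrt_le_mono real_sqrt_mult)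
qed

lemma joint_norm_collision_part_le: "joint_norm n m (collision_part n F) \<le> joint_norm n m F"
  by (rule joint_norm_mono) (simp add: collision_part_def case_prod_beta)

lemma joint_norm_collision_free_part_le: "joint_norm n m (collision_free_part n F) \<le> joint_norm n m F"
  by (rule joint_norm_mono) (simp add: collision_free_part_def case_prod_beta)

lemma collision_part_alg_apply: "collision_part n (alg_apply B M F) = alg_apply B M (collision_part n F)"
  unfolding collision_part_def alg_apply_def by auto

lemma collision_part_record_query_split:
  "collision_part n (record_query m F) = (\<lambda>p. collision_part n (record_query m (collision_part n F)) p
     + collision_part n (record_query m (collision_free_part n F)) p)"
  unfolding collision_part_def collision_free_part_def record_query_def
  by (auto simp: fun_eq_iff simp flip: sum.distrib distrib_left intro!: sum.cong)

lemma Delta_eq: "Delta n m U init t = joint_norm n m (collision_part n (phi_state n m U init t))"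
  unfolding Delta_def joint_norm_def L2_set_def collision_part_def
  by (auto intro!: arg_cong[where f = sqrt] sum.cong)

theorem proposition4p11:
  fixes n m T t :: nat and U :: "nat \<Rightarrow> amat" and init :: "nat \<times> nat"
  assumes "m \<ge> 2"
    and "\<forall>k\<le>T. unitary_on (alg_basis n m) (U k)"
    and "init \<in> alg_basis n m"
    and "t + 1 \<le> T"
  shows "Delta n m U init (t + 1) \<le> Delta n m U init t + sqrt (10 * real t / real m)"
proof -
  have m: "m > 0"
    using assms(1) by simp
  define \<Phi> where "\<Phi> = phi_state n m U init t"
  have "Delta n m U init (t + 1) = joint_norm n m (collision_part n (record_query m \<Phi>))"
    using assms(2,4) by (simp add: Delta_eq \<Phi>_def phi_state_Suc collision_part_alg_apply joint_norm_alg_apply)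
  also have "\<dots> \<le> joint_norm n m (collision_part n (record_query m (collision_part n \<Phi>)))
      + joint_norm n m (collision_part n (record_query m (collision_free_part n \<Phi>)))"
    by (subst collision_part_record_query_split) (rule joint_norm_add_le)
  also have "joint_norm n m (collision_part n (record_query m (collision_part n \<Phi>))) \<le> Delta n m U init t"
    using joint_norm_collision_part_le joint_norm_record_query[OF m]
    unfolding Delta_eq \<Phi>_def by metis
  also have "joint_norm n m (collision_part n (record_query m (collision_free_part n \<Phi>)))
      \<le> sqrt (10 * real t / real m) * joint_norm n m (collision_free_part n \<Phi>)"
    using m unfolding \<Phi>_def
    by (intro joint_norm_collision_part_record_query_le)
      (auto simp: collision_free_part_def phi_state_eq_0_if_card_rec_support)
  also have "\<dots> \<le> sqrt (10 * real t / real m)"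
    using joint_norm_collision_free_part_le[of n m \<Phi>] joint_norm_phi_state[OF m assms(2,3)] assms(4)
    unfolding \<Phi>_def by (simp add: mult_left_le)
  finally show ?thesis
    by simp
qed

end
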